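(* Let $K\ge1$, $M\ge 1$, let $u_1,\dots,u_K\in\mathbb{R}$, and write $u_k^+=\max\{u_k,0\}$, $u_k^-=\max\{-u_k,0\}$, $S_+=\sum_k u_k^+$, $S_-=\sum_k u_k^-$, $s=\sum_k u_k$. Fix $\eta>0$, $\sigma_z^2>0$, $\mu_1,\dots,\mu_K>0$, and deterministic weights $c_1,\dots,c_M\ge 0$ with $C_M=\sum_{m=1}^M c_m>0$. For $k=1,\dots,K$, $m=1,\dots,M$ and branch $\pm$, let $h_{k,m,\pm}\sim\mathcal{CN}(0,\mu_k^2)$, $z_{m,\pm}\sim\mathcal{CN}(0,\sigma_z^2)$ and $\phi_{k,m,\pm}\sim\mathrm{Unif}[0,2\pi)$, all mutually independent (across transmitters, branches and chips). Define $$a_{k,m,+}=\frac{\sqrt{\eta c_m u_k^+}}{\mu_k}e^{\mathrm{i}\phi_{k,m,+}},\qquad a_{k,m,-}=\frac{\sqrt{\eta c_m u_k^-}}{\mu_k}e^{\mathrm{i}\phi_{k,m,-}},$$ $y_{m,\pm}=\sum_{k=1}^K h_{k,m,\pm}a_{k,m,\pm}+z_{m,\pm}$, and $$\hat s_M=\frac{1}{\eta C_M}\sum_{m=1}^M\left(|y_{m,+}|^2-|y_{m,-}|^2\right).$$ Then $\mathbb{E}[\hat s_M]=s$ and $$\mathrm{Var}(\hat s_M)=\frac{\sum_{m=1}^M c_m^2}{C_M^2}\left(S_+^2+S_-^2\right)+\frac{2\sigma_z^2}{\eta C_M}\sum_{k=1}^K|u_k|+\frac{2M\sigma_z^4}{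\eta^2C_M^2}.$$
   Context: $\mathcal{CN}(0,\nu)$ denotes the circularly symmetric complex Gaussian distribution with variance $\nu$; $\mathrm{i}$ is the imaginary unit. *)

theory Defs
  imports "HOL-Probability.Probability"
begin

definition CN_density :: "real \<Rightarrow> complex \<Rightarrow> ennreal" where
  "CN_density nu z = ennreal (exp (- (cmod z)\<^sup>2 / nu) / (pi * nu))"

definition unif_phase_density :: "real \<Rightarrow> ennreal" where
  "unif_phase_density x = ennreal (indicator {0..<2*pi} x / (2*pi))"

text \<open>Indices of the random sources: channel h_{k,m,b}, noise z_{m,b}, phase phi_{k,m,b};
  the Boolean b is the branch (True = +, False = -).\<close>
datatype src = SrcH nat nat bool | SrcZ nat bool | SrcPhi nat nat bool

definition src_index :: "nat \<Rightarrow> nat \<Rightarrow> src set" where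
  "src_index K M =
     {SrcH k m b | k m b. k \<in> {1..K} \<and> m \<in> {1..M}} \<union>
     {SrcZ m b | m b. m \<in> {1..M}} \<union>
     {SrcPhi k m b | k m b. k \<in> {1..K} \<and> m \<in> {1..M}}"

text \<open>The family of all sources; phases are embedded into complex via of_real
  (an injective measurable embedding) so that all sources share one value type.\<close>
definition src_family ::
  "(nat \<Rightarrow> nat \<Rightarrow> bool \<Rightarrow> 'a \<Rightarrow> complex) \<Rightarrow> (nat \<Rightarrow> bool \<Rightarrow> 'a \<Rightarrow> complex) \<Rightarrow>
   (nat \<Rightarrow> nat \<Rightarrow> bool \<Rightarrow> 'a \<Rightarrow> real) \<Rightarrow> src \<Rightarrow> 'a \<Rightarrow> complex" where
  "src_family h z phi i = (case i of
      SrcH k m b \<Rightarrow> h k m b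
    | SrcZ m b \<Rightarrow> z m b
    | SrcPhi k m b \<Rightarrow> (\<lambda>\<omega>. complex_of_real (phi k m b \<omega>)))"

definition upos :: "real \<Rightarrow> real" where "upos x = max x 0"
definition uneg :: "real \<Rightarrow> real" where "uneg x = max (- x) 0"

definition coef ::
  "real \<Rightarrow> (nat \<Rightarrow> real) \<Rightarrow> (nat \<Rightarrow> real) \<Rightarrow> (nat \<Rightarrow> real) \<Rightarrow>
   (nat \<Rightarrow> nat \<Rightarrow> bool \<Rightarrow> 'a \<Rightarrow> real) \<Rightarrow> nat \<Rightarrow> nat \<Rightarrow> bool \<Rightarrow> 'a \<Rightarrow> complex" where
  "coef \<eta> c u \<mu> phi k m b \<omega> =
     complex_of_real (sqrt (\<eta> * c m * (if b then upos (u k) else uneg (u k))) / \<mu> k)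
     * exp (\<i> * complex_of_real (phi k m b \<omega>))"

definition rx ::
  "nat \<Rightarrow> real \<Rightarrow> (nat \<Rightarrow> real) \<Rightarrow> (nat \<Rightarrow> real) \<Rightarrow> (nat \<Rightarrow> real) \<Rightarrow>
   (nat \<Rightarrow> nat \<Rightarrow> bool \<Rightarrow> 'a \<Rightarrow> complex) \<Rightarrow> (nat \<Rightarrow> bool \<Rightarrow> 'a \<Rightarrow> complex) \<Rightarrow>
   (nat \<Rightarrow> nat \<Rightarrow> bool \<Rightarrow> 'a \<Rightarrow> real) \<Rightarrow> nat \<Rightarrow> bool \<Rightarrow> 'a \<Rightarrow> complex" where
  "rx K \<eta> c u \<mu> h z phi m b \<omega> =
     (\<Sum>k\<in>{1..K}. h k m b \<omega> * coef \<eta> c u \<mu> phi k m b \<omega>) + z m b \<omega>"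

definition s_hat ::
  "nat \<Rightarrow> nat \<Rightarrow> real \<Rightarrow> (nat \<Rightarrow> real) \<Rightarrow> (nat \<Rightarrow> real) \<Rightarrow> (nat \<Rightarrow> real) \<Rightarrow>
   (nat \<Rightarrow> nat \<Rightarrow> bool \<Rightarrow> 'a \<Rightarrow> complex) \<Rightarrow> (nat \<Rightarrow> bool \<Rightarrow> 'a \<Rightarrow> complex) \<Rightarrow>
   (nat \<Rightarrow> nat \<Rightarrow> bool \<Rightarrow> 'a \<Rightarrow> real) \<Rightarrow> 'a \<Rightarrow> real" where
  "s_hat K M \<eta> c u \<mu> h z phi \<omega> =
     1 / (\<eta> * (\<Sum>m\<in>{1..M}. c m)) *
     (\<Sum>m\<in>{1..M}. (cmod (rx K \<eta> c u \<mu> h z phi m True \<omega>))\<^sup>2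
                  - (cmod (rx K \<eta> c u \<mu> h z phi m False \<omega>))\<^sup>2)"

end

theory Submission
  imports Defs
begin

(* Call a complex random variable W circular with power v if E W = E W^2 = 0, E |W|^2 = v and
   E |W|^4 = 2 v^2, i.e. its mixed moments up to order four are those of CN(0,v).  Circularity is
   preserved by adding an independent circular variable (the powers add) and by multiplying with
   an independent unimodular factor times a real constant r (the power scales by r^2).  Hence each
   received signal y_{m,+-} is circular with power lambda_{m,+-} = eta c_m S_+- + sigma_z^2, so
   |y_{m,+-}|^2 has mean lambda_{m,+-} and variance lambda_{m,+-}^2.  The 2M signals are functions
   of disjoint groups of the independent sources, so the variance of the signed sum s_hat_M is the
   sum of these variances, and expanding the squares gives the formula. *)

section \<open>The complex normal distribution\<close>

definition complex_of_pair :: "real \<times> real \<Rightarrow> complex" where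
  "complex_of_pair p = Complex (fst p) (snd p)"

lemma complex_of_pair_eq: "complex_of_pair p = of_real (fst p) + \<i> * of_real (snd p)"
  by (simp add: complex_of_pair_def Complex_eq)

lemma borel_measurable_complex_of_pair [measurable]:
  "complex_of_pair \<in> borel_measurable (M \<Otimes>\<^sub>M N)"
  if "sets M = sets borel" "sets N = sets borel"
  unfolding complex_of_pair_eq[abs_def] using that by measurable

lemma lborel_complex_eq_distr_pair:
  "(lborel :: complex measure) = distr (lborel \<Otimes>\<^sub>M lborel) borel complex_of_pair"
proof (rule lborel_eqI)
  fix l u :: complex
  assume lu: "\<And>b. b \<in> Basis \<Longrightarrow> l \<bullet> b \<le> u \<bullet> b"
  have le: "Re l \<le> Re u" "Im l \<le> Im u"
    using lu[of 1] lu[of \<i>] by auto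
  have "complex_of_pair -` box l u \<inter> space (lborel \<Otimes>\<^sub>M lborel) = {Re l<..<Re u} \<times> {Im l<..<Im u}"
    by (auto simp: complex_of_pair_def box_def Basis_complex_def space_pair_measure)
  then have "emeasure (distr (lborel \<Otimes>\<^sub>M lborel) borel complex_of_pair) (box l u) =
      ennreal (Re u - Re l) * ennreal (Im u - Im l)"
    using le by (simp add: emeasure_distr lborel.emeasure_pair_measure_Times)
  then show "emeasure (distr (lborel \<Otimes>\<^sub>M lborel) borel complex_of_pair) (box l u) =
      (\<Prod>b\<in>Basis. (u - l) \<bullet> b)"
    using le by (simp add: Basis_complex_def ennreal_mult)
qed simp

lemma has_bochner_integral_pair_measure_mult:
  fixes f g :: "_ \<Rightarrow> real"
  assumes "sigma_finite_measure M" "sigma_finite_measure N"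
    and f: "integrable M f" and g: "integrable N g"
  shows "has_bochner_integral (M \<Otimes>\<^sub>M N) (\<lambda>x. f (fst x) * g (snd x))
           (integral\<^sup>L M f * integral\<^sup>L N g)"
proof -
  interpret pair_sigma_finite M N
    using assms(1,2) by (simp add: pair_sigma_finite_def)
  have [measurable]: "f \<in> borel_measurable M" "g \<in> borel_measurable N"
    using f g by auto
  have int: "integrable (M \<Otimes>\<^sub>M N) (\<lambda>x. f (fst x) * g (snd x))"
    by (rule Fubini_integrable) (use f g in \<open>simp_all add: abs_mult\<close>)
  then show ?thesis
    using integral_fst'[OF int] by (simp add: has_bochner_integral_iff)
qed

definition centered_normal :: "real \<Rightarrow> real measure" where
  "centered_normal s = density lborel (\<lambda>x. ennreal (normal_density 0 s x))"

lemma prob_space_centered_normal: "s > 0 \<Longrightarrow> prob_space (centered_normal s)"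
  unfolding centered_normal_def by (rule prob_space_normal_density)

lemma sets_centered_normal [measurable_cong, simp]: "sets (centered_normal s) = sets borel"
  by (simp add: centered_normal_def)

definition centered_normal_moment :: "real \<Rightarrow> nat \<Rightarrow> real" where
  "centered_normal_moment s k = (\<integral>x. x ^ k \<partial>centered_normal s)"

lemma
  assumes "s > 0"
  shows integrable_centered_normal_power: "integrable (centered_normal s) (\<lambda>x. x ^ k)"
    and centered_normal_moment_even: "centered_normal_moment s (2 * k) = fact (2 * k) / ((2 / s\<^sup>2) ^ k * fact k)"
    and centered_normal_moment_odd: "centered_normal_moment s (2 * k + 1) = 0"
  using integrable_normal_moment[OF assms, of 0 k]
    has_bochner_integral_integral_eq[OF normal_moment_even[OF assms, of 0 k]]
    has_bochner_integral_integral_eq[OF normal_moment_odd[OF assms, of 0 k]]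
  by (simp_all add: centered_normal_def centered_normal_moment_def integrable_density integral_density)

lemma centered_normal_moment_values:
  assumes "s > 0"
  shows "centered_normal_moment s 0 = 1" "centered_normal_moment s 1 = 0"
    "centered_normal_moment s 2 = s\<^sup>2" "centered_normal_moment s 3 = 0"
    "centered_normal_moment s 4 = 3 * s ^ 4"
  using centered_normal_moment_even[OF assms, of 0] centered_normal_moment_odd[OF assms, of 0]
    centered_normal_moment_even[OF assms, of 1] centered_normal_moment_odd[OF assms, of 1]
    centered_normal_moment_even[OF assms, of 2] assms
  by (simp_all add: field_simps numeral_eq_Suc fact_Suc power2_eq_square)

lemma has_bochner_integral_normal_pair_monomial:
  assumes "s > 0"
  shows "has_bochner_integral (centered_normal s \<Otimes>\<^sub>M centered_normal s)
           (\<lambda>x. fst x ^ i * snd x ^ j) (centered_normal_moment s i * centered_normal_moment s j)"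
  using has_bochner_integral_pair_measure_mult[OF
      prob_space_imp_sigma_finite[OF prob_space_centered_normal[OF assms]]
      prob_space_imp_sigma_finite[OF prob_space_centered_normal[OF assms]]
      integrable_centered_normal_power[OF assms] integrable_centered_normal_power[OF assms]]
  by (simp add: centered_normal_moment_def)

lemma density_CN_eq_distr_normal_pair:
  assumes nu: "nu > 0"
  shows "density lborel (CN_density nu) =
    distr (centered_normal (sqrt (nu / 2)) \<Otimes>\<^sub>M centered_normal (sqrt (nu / 2))) borel complex_of_pair"
proof -
  define s where "s = sqrt (nu / 2)"
  have s: "s > 0" "s\<^sup>2 = nu / 2" using nu by (simp_all add: s_def)
  interpret N: prob_space "centered_normal s" using prob_space_centered_normal[OF s(1)] .
  have [measurable]: "CN_density nu \<in> borel_measurable borel"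
    unfolding CN_density_def by measurable
  have dens: "(\<lambda>x. CN_density nu (complex_of_pair x)) =
      (\<lambda>(a, b). ennreal (normal_density 0 s a) * ennreal (normal_density 0 s b))"
  proof (intro ext, clarify)
    fix a b :: real
    have "exp (- (cmod (Complex a b))\<^sup>2 / nu) / (pi * nu) = normal_density 0 s a * normal_density 0 s b"
      unfolding normal_density_def s(2) cmod_def using nu
      by (simp add: field_simps real_sqrt_mult[symmetric] exp_add[symmetric] power2_eq_square)
    then show "CN_density nu (complex_of_pair (a, b)) =
        ennreal (normal_density 0 s a) * ennreal (normal_density 0 s b)"
      by (simp add: CN_density_def complex_of_pair_def ennreal_mult[symmetric])
  qed
  have "density lborel (CN_density nu) =
      distr (density (lborel \<Otimes>\<^sub>M lborel) (\<lambda>x. CN_density nu (complex_of_pair x))) borel complex_of_pair"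
    unfolding lborel_complex_eq_distr_pair by (rule density_distr) measurable
  also have "density (lborel \<Otimes>\<^sub>M lborel) (\<lambda>x. CN_density nu (complex_of_pair x)) =
      centered_normal s \<Otimes>\<^sub>M centered_normal s"
    unfolding centered_normal_def dens
    by (rule pair_measure_density[symmetric])
      (auto intro: lborel.sigma_finite_measure_axioms N.sigma_finite_measure_axioms[unfolded centered_normal_def])
  finally show ?thesis by (simp add: s_def)
qed

lemma has_bochner_integral_distr_iff:
  fixes g :: "'b \<Rightarrow> 'c::{banach, second_countable_topology}"
  assumes "g \<in> borel_measurable N" "X \<in> measurable M N"
  shows "has_bochner_integral (distr M N X) g a \<longleftrightarrow> has_bochner_integral M (\<lambda>x. g (X x)) a"
  using assms by (simp add: has_bochner_integral_iff integrable_distr_eq integral_distr)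

lemma has_bochner_integral_CN:
  fixes g :: "complex \<Rightarrow> 'b::{banach, second_countable_topology}"
  assumes nu: "nu > 0" and Z: "distributed P lborel Z (CN_density nu)"
    and [measurable]: "g \<in> borel_measurable borel"
    and "has_bochner_integral (centered_normal (sqrt (nu / 2)) \<Otimes>\<^sub>M centered_normal (sqrt (nu / 2)))
           (\<lambda>x. g (complex_of_pair x)) \<mu>"
  shows "has_bochner_integral P (\<lambda>\<omega>. g (Z \<omega>)) \<mu>"
proof -
  have [measurable]: "Z \<in> borel_measurable P"
    using Z by (simp add: distributed_def measurable_lborel1)
  have "distr P borel Z =
      distr (centered_normal (sqrt (nu / 2)) \<Otimes>\<^sub>M centered_normal (sqrt (nu / 2))) borel complex_of_pair"
    using Z density_CN_eq_distr_normal_pair[OF nu] by (simp add: distributed_def cong: distr_cong)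
  then show ?thesis
    using assms(4) has_bochner_integral_distr_iff[of g borel Z P]
      has_bochner_integral_distr_iff[of g borel complex_of_pair] by simp
qed

section \<open>Circular random variables\<close>

lemma norm_power_le_one_plus_power4: "n \<le> 4 \<Longrightarrow> norm z ^ n \<le> 1 + norm z ^ 4"
proof (cases "norm z \<le> 1")
  case True
  assume "n \<le> 4"
  have "norm z ^ n \<le> 1" using True by (simp add: power_le_one)
  then show ?thesis by (smt (verit) norm_ge_zero zero_le_power)
next
  case False
  assume "n \<le> 4"
  then have "norm z ^ n \<le> norm z ^ 4" using False by (intro power_increasing) auto
  then show ?thesis by simp
qed

lemma borel_measurable_cnj [measurable (raw)]:
  "f \<in> borel_measurable M \<Longrightarrow> (\<lambda>x. cnj (f x)) \<in> borel_measurable M"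
  by (rule measurable_compose[OF _ borel_measurable_continuous_onI[OF continuous_on_cnj[OF continuous_on_id]]])

lemma norm_mixed_power: "norm (z ^ a * cnj z ^ b) = cmod z ^ (a + b)"
  by (simp add: norm_mult norm_power power_add)

definition mixed_moment :: "'a measure \<Rightarrow> ('a \<Rightarrow> complex) \<Rightarrow> nat \<Rightarrow> nat \<Rightarrow> complex" where
  "mixed_moment P W a b = (\<integral>\<omega>. W \<omega> ^ a * cnj (W \<omega>) ^ b \<partial>P)"

definition circular_rv :: "'a measure \<Rightarrow> ('a \<Rightarrow> complex) \<Rightarrow> real \<Rightarrow> bool" where
  "circular_rv P W v \<longleftrightarrow> W \<in> borel_measurable P \<and> integrable P (\<lambda>\<omega>. cmod (W \<omega>) ^ 4)
     \<and> mixed_moment P W 1 0 = 0 \<and> mixed_moment P W 2 0 = 0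
     \<and> mixed_moment P W 1 1 = of_real v \<and> mixed_moment P W 2 2 = of_real (2 * v\<^sup>2)"

lemma circular_rvI:
  assumes "W \<in> borel_measurable P"
    and "has_bochner_integral P (\<lambda>\<omega>. W \<omega> ^ 1 * cnj (W \<omega>) ^ 0) 0"
    and "has_bochner_integral P (\<lambda>\<omega>. W \<omega> ^ 2 * cnj (W \<omega>) ^ 0) 0"
    and "has_bochner_integral P (\<lambda>\<omega>. W \<omega> ^ 1 * cnj (W \<omega>) ^ 1) (of_real v)"
    and M22: "has_bochner_integral P (\<lambda>\<omega>. W \<omega> ^ 2 * cnj (W \<omega>) ^ 2) (of_real (2 * v\<^sup>2))"
  shows "circular_rv P W v"
proof -
  have "integrable P (\<lambda>\<omega>. norm (W \<omega> ^ 2 * cnj (W \<omega>) ^ 2))"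
    using M22 by (simp add: has_bochner_integral_iff)
  then show ?thesis
    using assms unfolding circular_rv_def mixed_moment_def norm_mixed_power
    by (simp add: has_bochner_integral_iff del: power_Suc)
qed

lemma circular_rv_CN:
  assumes nu: "nu > 0" and Z: "distributed P lborel Z (CN_density nu)"
  shows "circular_rv P Z nu"
proof -
  define s where "s = sqrt (nu / 2)"
  have s: "s > 0" "nu = 2 * s\<^sup>2" using nu by (simp_all add: s_def)
  define Q where "Q = centered_normal s \<Otimes>\<^sub>M centered_normal s"
  define m where "m = centered_normal_moment s"
  have transfer: "has_bochner_integral P (\<lambda>\<omega>. Z \<omega> ^ a * cnj (Z \<omega>) ^ b) \<nu>"
    if "has_bochner_integral Q g \<mu>"
      and "\<And>x. complex_of_pair x ^ a * cnj (complex_of_pair x) ^ b = g x" and "\<mu> = \<nu>"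
    for a b g \<mu> \<nu>
  proof -
    have "(\<lambda>z. z ^ a * cnj z ^ b) \<in> borel_measurable borel"
      by measurable
    then show ?thesis
      using that has_bochner_integral_CN[OF nu Z, of "\<lambda>z. z ^ a * cnj z ^ b" \<nu>]
      by (simp add: Q_def s_def)
  qed
  have mono: "has_bochner_integral Q (\<lambda>x. complex_of_real (fst x ^ i * snd x ^ j)) (of_real (m i * m j))"
    for i j
    unfolding Q_def m_def
    by (rule has_bochner_integral_bounded_linear[OF bounded_linear_of_real
          has_bochner_integral_normal_pair_monomial[OF s(1)]])
  note m = centered_normal_moment_values[OF s(1), folded m_def]
  have "has_bochner_integral Q (\<lambda>x. of_real (fst x ^ 1 * snd x ^ 0) + \<i> * of_real (fst x ^ 0 * snd x ^ 1))
      (of_real (m 1 * m 0) + \<i> * of_real (m 0 * m 1))"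
    by (intro has_bochner_integral_add has_bochner_integral_mult_right mono)
  then have M10: "has_bochner_integral P (\<lambda>\<omega>. Z \<omega> ^ 1 * cnj (Z \<omega>) ^ 0) 0"
    by (rule transfer) (simp_all add: complex_of_pair_eq m del: One_nat_def)
  have "has_bochner_integral Q (\<lambda>x. of_real (fst x ^ 2 * snd x ^ 0) - of_real (fst x ^ 0 * snd x ^ 2)
        + \<i> * (2 * of_real (fst x ^ 1 * snd x ^ 1)))
      (of_real (m 2 * m 0) - of_real (m 0 * m 2) + \<i> * (2 * of_real (m 1 * m 1)))"
    by (intro has_bochner_integral_add has_bochner_integral_diff has_bochner_integral_mult_right mono)
  then have M20: "has_bochner_integral P (\<lambda>\<omega>. Z \<omega> ^ 2 * cnj (Z \<omega>) ^ 0) 0"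
    by (rule transfer) (simp_all add: complex_of_pair_eq power2_eq_square algebra_simps m del: One_nat_def)
  have "has_bochner_integral Q (\<lambda>x. of_real (fst x ^ 2 * snd x ^ 0) + of_real (fst x ^ 0 * snd x ^ 2))
      (of_real (m 2 * m 0) + of_real (m 0 * m 2) :: complex)"
    by (intro has_bochner_integral_add mono)
  then have M11: "has_bochner_integral P (\<lambda>\<omega>. Z \<omega> ^ 1 * cnj (Z \<omega>) ^ 1) (of_real nu)"
    by (rule transfer) (simp_all add: complex_of_pair_eq power2_eq_square algebra_simps m s(2))
  have "has_bochner_integral Q (\<lambda>x. of_real (fst x ^ 4 * snd x ^ 0) + 2 * of_real (fst x ^ 2 * snd x ^ 2)
        + of_real (fst x ^ 0 * snd x ^ 4))
      (of_real (m 4 * m 0) + 2 * of_real (m 2 * m 2) + of_real (m 0 * m 4) :: complex)"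
    by (intro has_bochner_integral_add has_bochner_integral_mult_right mono)
  then have M22: "has_bochner_integral P (\<lambda>\<omega>. Z \<omega> ^ 2 * cnj (Z \<omega>) ^ 2) (of_real (2 * nu\<^sup>2))"
    by (rule transfer)
      (simp add: complex_of_pair_eq power2_eq_square algebra_simps numeral_eq_Suc,
       simp add: m s(2) power2_eq_square power4_eq_xxxx)
  show ?thesis
    using M10 M20 M11 M22 by (intro circular_rvI) simp_all
qed

lemma circular_rv_integrable:
  fixes f :: "complex \<Rightarrow> 'b::{banach, second_countable_topology}"
  assumes "prob_space P" "circular_rv P W v"
    and [measurable]: "f \<in> borel_measurable borel"
    and f_bound: "\<And>z. norm (f z) \<le> 1 + cmod z ^ 4"
  shows "integrable P (\<lambda>\<omega>. f (W \<omega>))"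
proof (rule Bochner_Integration.integrable_bound)
  interpret prob_space P by fact
  have [measurable]: "W \<in> borel_measurable P"
    using assms(2) by (simp add: circular_rv_def)
  show "integrable P (\<lambda>\<omega>. 1 + cmod (W \<omega>) ^ 4)"
    using assms(2) by (simp add: circular_rv_def)
  show "(\<lambda>\<omega>. f (W \<omega>)) \<in> borel_measurable P" by measurable
  show "AE \<omega> in P. norm (f (W \<omega>)) \<le> norm (1 + cmod (W \<omega>) ^ 4)"
    using f_bound by (auto intro: order_trans)
qed

lemma integrable_mixed_power:
  assumes "prob_space P" "circular_rv P W v" "a + b \<le> 4"
  shows "integrable P (\<lambda>\<omega>. W \<omega> ^ a * cnj (W \<omega>) ^ b)"
  using assms
  by (intro circular_rv_integrable[where f = "\<lambda>z. z ^ a * cnj z ^ b"])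
    (auto simp: norm_mixed_power norm_power_le_one_plus_power4
      intro!: borel_measurable_continuous_onI continuous_intros)

lemma mixed_moment_swap: "mixed_moment P W b a = cnj (mixed_moment P W a b)"
proof -
  have swap: "cnj (W \<omega> ^ a * cnj (W \<omega>) ^ b) = W \<omega> ^ b * cnj (W \<omega>) ^ a" for \<omega>
    by (simp add: mult.commute)
  show ?thesis
    unfolding mixed_moment_def Bochner_Integration.integral_cnj[symmetric] swap ..
qed

lemma circular_rv_mixed_moments:
  assumes "prob_space P" "circular_rv P W v"
  shows "mixed_moment P W 0 0 = 1" "mixed_moment P W 1 0 = 0" "mixed_moment P W 0 1 = 0"
    "mixed_moment P W 2 0 = 0" "mixed_moment P W 0 2 = 0"
    "mixed_moment P W 1 1 = of_real v" "mixed_moment P W 2 2 = of_real (2 * v\<^sup>2)"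
  using assms mixed_moment_swap[of P W 0 1] mixed_moment_swap[of P W 0 2]
  by (simp_all add: circular_rv_def mixed_moment_def prob_space.prob_space)

lemma (in prob_space) has_bochner_integral_indep_mult:
  fixes f g :: "_ \<Rightarrow> 'c::{real_normed_field, banach, second_countable_topology}"
  assumes "indep_var N1 X N2 Y" "f \<in> borel_measurable N1" "g \<in> borel_measurable N2"
    and "integrable M (\<lambda>\<omega>. f (X \<omega>))" "integrable M (\<lambda>\<omega>. g (Y \<omega>))"
  shows "has_bochner_integral M (\<lambda>\<omega>. f (X \<omega>) * g (Y \<omega>))
           ((\<integral>\<omega>. f (X \<omega>) \<partial>M) * (\<integral>\<omega>. g (Y \<omega>) \<partial>M))"
proof -
  have "indep_var borel (\<lambda>\<omega>. f (X \<omega>)) borel (\<lambda>\<omega>. g (Y \<omega>))"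
    using indep_var_compose[OF assms(1-3)] by (simp add: comp_def)
  from indep_var_integrable[OF this assms(4,5)] indep_var_lebesgue_integral[OF this assms(4,5)]
  show ?thesis by (simp add: has_bochner_integral_iff)
qed

lemma circular_rv_add:
  assumes P: "prob_space P" and S: "circular_rv P S v" and W: "circular_rv P W w"
    and indep: "prob_space.indep_var P borel S borel W"
  shows "circular_rv P (\<lambda>\<omega>. S \<omega> + W \<omega>) (v + w)"
proof -
  interpret prob_space P by fact
  define X where "X a b c d \<omega> = (S \<omega> ^ a * cnj (S \<omega>) ^ b) * (W \<omega> ^ c * cnj (W \<omega>) ^ d)"
    for a b c d \<omega>
  have X: "has_bochner_integral P (X a b c d) (mixed_moment P S a b * mixed_moment P W c d)"
    if "a + b \<le> 4" "c + d \<le> 4" for a b c d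
    unfolding X_def mixed_moment_def
    by (rule has_bochner_integral_indep_mult[OF indep]
        integrable_mixed_power[OF P S] integrable_mixed_power[OF P W] that
        borel_measurable_continuous_onI continuous_intros)+
  have expand: "\<And>g \<mu> \<nu> a b. has_bochner_integral P g \<mu> \<Longrightarrow>
      (\<And>\<omega>. (S \<omega> + W \<omega>) ^ a * cnj (S \<omega> + W \<omega>) ^ b = g \<omega>) \<Longrightarrow> \<mu> = \<nu> \<Longrightarrow>
      has_bochner_integral P (\<lambda>\<omega>. (S \<omega> + W \<omega>) ^ a * cnj (S \<omega> + W \<omega>) ^ b) \<nu>"
    by simp
  note mS = circular_rv_mixed_moments[OF P S] and mW = circular_rv_mixed_moments[OF P W]
  have [measurable]: "S \<in> borel_measurable P" "W \<in> borel_measurable P"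
    using S W by (simp_all add: circular_rv_def)
  note integrals = has_bochner_integral_add has_bochner_integral_mult_right X
  show ?thesis
  proof (rule circular_rvI)
    show "(\<lambda>\<omega>. S \<omega> + W \<omega>) \<in> borel_measurable P" by measurable
    show "has_bochner_integral P (\<lambda>\<omega>. (S \<omega> + W \<omega>) ^ 1 * cnj (S \<omega> + W \<omega>) ^ 0) 0"
      by (rule expand[of "\<lambda>\<omega>. X 1 0 0 0 \<omega> + X 0 0 1 0 \<omega>"], (rule integrals | arith)+)
        (simp_all add: X_def mS mW del: One_nat_def)
    show "has_bochner_integral P (\<lambda>\<omega>. (S \<omega> + W \<omega>) ^ 2 * cnj (S \<omega> + W \<omega>) ^ 0) 0"
      by (rule expand[of "\<lambda>\<omega>. X 2 0 0 0 \<omega> + 2 * X 1 0 1 0 \<omega> + X 0 0 2 0 \<omega>"],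
          (rule integrals | arith)+)
        (simp_all add: X_def mS mW power2_eq_square algebra_simps del: One_nat_def)
    show "has_bochner_integral P (\<lambda>\<omega>. (S \<omega> + W \<omega>) ^ 1 * cnj (S \<omega> + W \<omega>) ^ 1) (of_real (v + w))"
      by (rule expand[of "\<lambda>\<omega>. X 1 1 0 0 \<omega> + X 0 0 1 1 \<omega> + X 1 0 0 1 \<omega> + X 0 1 1 0 \<omega>"],
          (rule integrals | arith)+)
        (simp_all add: X_def mS mW algebra_simps del: One_nat_def)
    show "has_bochner_integral P (\<lambda>\<omega>. (S \<omega> + W \<omega>) ^ 2 * cnj (S \<omega> + W \<omega>) ^ 2)
        (of_real (2 * (v + w)\<^sup>2))"
      by (rule expand[of "\<lambda>\<omega>. X 2 2 0 0 \<omega> + X 0 0 2 2 \<omega> + 4 * X 1 1 1 1 \<omega>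
          + X 2 0 0 2 \<omega> + X 0 2 2 0 \<omega> + 2 * X 2 1 0 1 \<omega> + 2 * X 1 2 1 0 \<omega>
          + 2 * X 1 0 1 2 \<omega> + 2 * X 0 1 2 1 \<omega>"], (rule integrals | arith)+)
        (simp_all add: X_def mS mW power2_eq_square algebra_simps del: One_nat_def)
  qed
qed

lemma circular_rv_mult_unimodular:
  assumes P: "prob_space P" and H: "circular_rv P H v"
    and E_meas: "E \<in> borel_measurable P" and E_norm: "\<And>\<omega>. cmod (E \<omega>) = 1"
    and indep: "prob_space.indep_var P borel H borel E"
  shows "circular_rv P (\<lambda>\<omega>. H \<omega> * (of_real r * E \<omega>)) (r\<^sup>2 * v)"
proof -
  interpret prob_space P by fact
  have [measurable]: "H \<in> borel_measurable P" "E \<in> borel_measurable P"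
    using H E_meas by (simp_all add: circular_rv_def)
  have E_int: "integrable P (\<lambda>\<omega>. E \<omega> ^ a * cnj (E \<omega>) ^ b)" for a b
    by (rule integrable_const_bound[where B = 1]) (simp_all add: norm_mixed_power E_norm, measurable)
  have "E \<omega> ^ a * cnj (E \<omega>) ^ a = 1" for a \<omega>
    using complex_norm_square[of "E \<omega>"] by (simp add: E_norm flip: power_mult_distrib)
  then have mE: "mixed_moment P E a a = 1" for a
    by (simp add: mixed_moment_def prob_space)
  have scaled: "has_bochner_integral P
      (\<lambda>\<omega>. (H \<omega> * (of_real r * E \<omega>)) ^ a * cnj (H \<omega> * (of_real r * E \<omega>)) ^ b)
      (of_real (r ^ (a + b)) * (mixed_moment P H a b * mixed_moment P E a b))"
    if "a + b \<le> 4" for a b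
  proof -
    have "has_bochner_integral P (\<lambda>\<omega>. (H \<omega> ^ a * cnj (H \<omega>) ^ b) * (E \<omega> ^ a * cnj (E \<omega>) ^ b))
        (mixed_moment P H a b * mixed_moment P E a b)"
      unfolding mixed_moment_def
      by (rule has_bochner_integral_indep_mult[OF indep] integrable_mixed_power[OF P H that]
          E_int borel_measurable_continuous_onI continuous_intros)+
    then have "has_bochner_integral P
        (\<lambda>\<omega>. of_real (r ^ (a + b)) * ((H \<omega> ^ a * cnj (H \<omega>) ^ b) * (E \<omega> ^ a * cnj (E \<omega>) ^ b)))
        (of_real (r ^ (a + b)) * (mixed_moment P H a b * mixed_moment P E a b))"
      by (rule has_bochner_integral_mult_right)
    moreover have "of_real (r ^ (a + b)) * ((H \<omega> ^ a * cnj (H \<omega>) ^ b) * (E \<omega> ^ a * cnj (E \<omega>) ^ b)) =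
        (H \<omega> * (of_real r * E \<omega>)) ^ a * cnj (H \<omega> * (of_real r * E \<omega>)) ^ b" for \<omega>
      by (simp add: power_mult_distrib power_add mult_ac)
    ultimately show ?thesis
      by (rule has_bochner_integral_cong[THEN iffD1, OF refl _ refl, rotated])
  qed
  note mH = circular_rv_mixed_moments[OF P H]
  show ?thesis
    using scaled[of 1 0] scaled[of 2 0] scaled[of 1 1] scaled[of 2 2]
    by (intro circular_rvI) (simp_all add: mH mE power_mult_distrib power2_eq_square power4_eq_xxxx
        mult_ac del: One_nat_def)
qed

lemma circular_rv_scaled_norm_square:
  fixes a :: real
  assumes P: "prob_space P" and W: "circular_rv P W v"
  defines "X \<equiv> \<lambda>\<omega>. a * cmod (W \<omega>) ^ 2"
  shows "integrable P X" "integrable P (\<lambda>\<omega>. (X \<omega>)\<^sup>2)"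
    and "prob_space.expectation P X = a * v" "prob_space.variance P X = a\<^sup>2 * v\<^sup>2"
proof -
  interpret prob_space P by fact
  have int: "integrable P (\<lambda>\<omega>. (cmod (W \<omega>) ^ 2) ^ n)" if "n \<le> 2" for n
    using that by (intro circular_rv_integrable[OF P W])
      (simp_all add: norm_power_le_one_plus_power4 flip: power_mult)
  have "W \<omega> ^ n * cnj (W \<omega>) ^ n = of_real ((cmod (W \<omega>) ^ 2) ^ n)" for \<omega> n
    by (metis complex_norm_square of_real_power power_mult_distrib)
  then have "of_real (\<integral>\<omega>. (cmod (W \<omega>) ^ 2) ^ n \<partial>P) = mixed_moment P W n n" for n
    by (simp add: mixed_moment_def del: of_real_power)
  from this[of 1] this[of 2] have E2: "(\<integral>\<omega>. cmod (W \<omega>) ^ 2 \<partial>P) = v"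
    and "(\<integral>\<omega>. (cmod (W \<omega>) ^ 2) ^ 2 \<partial>P) = 2 * v\<^sup>2"
    using circular_rv_mixed_moments(6,7)[OF P W] by (simp_all only: power_one_right of_real_eq_iff)
  then have E4: "(\<integral>\<omega>. cmod (W \<omega>) ^ 4 \<partial>P) = 2 * v\<^sup>2"
    by (simp flip: power_mult)
  have sq: "(X \<omega>)\<^sup>2 = a\<^sup>2 * cmod (W \<omega>) ^ 4" for \<omega>
    by (simp add: X_def power_mult_distrib flip: power_mult)
  show "integrable P X" "integrable P (\<lambda>\<omega>. (X \<omega>)\<^sup>2)"
    unfolding sq using int[of 1] int[of 2] by (simp_all add: X_def)
  moreover show "expectation X = a * v"
    by (simp add: X_def E2)
  ultimately show "variance X = a\<^sup>2 * v\<^sup>2"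
    using variance_eq[of X] by (simp add: sq E4 power_mult_distrib)
qed

section \<open>Independence\<close>

lemma (in prob_space) variance_sum_indep:
  fixes X :: "'i \<Rightarrow> 'a \<Rightarrow> real"
  assumes J: "finite J"
    and int: "\<And>j. j \<in> J \<Longrightarrow> integrable M (X j)"
    and int2: "\<And>j. j \<in> J \<Longrightarrow> integrable M (\<lambda>\<omega>. (X j \<omega>)\<^sup>2)"
    and indep: "\<And>i j. i \<in> J \<Longrightarrow> j \<in> J \<Longrightarrow> i \<noteq> j \<Longrightarrow> indep_var borel (X i) borel (X j)"
  shows "variance (\<lambda>\<omega>. \<Sum>j\<in>J. X j \<omega>) = (\<Sum>j\<in>J. variance (X j))"
proof -
  define e where "e j \<omega> = X j \<omega> - expectation (X j)" for j \<omega>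
  have e_int: "integrable M (e j)" if "j \<in> J" for j
    using int[OF that] by (simp add: e_def[abs_def])
  have e_mean: "expectation (e j) = 0" if "j \<in> J" for j
    using int[OF that] by (simp add: e_def[abs_def] prob_space)
  have cross: "has_bochner_integral M (\<lambda>\<omega>. e i \<omega> * e j \<omega>) (if i = j then variance (X j) else 0)"
    if "i \<in> J" "j \<in> J" for i j
  proof (cases "i = j")
    case True
    have "integrable M (\<lambda>\<omega>. (X j \<omega>)\<^sup>2 + (expectation (X j))\<^sup>2 - 2 * X j \<omega> * expectation (X j))"
      using int int2 that by simp
    then show ?thesis
      using True by (simp add: has_bochner_integral_iff e_def power2_diff power2_eq_square[symmetric])
  next
    case False
    have "indep_var borel (e i) borel (e j)"
      using indep_var_compose[OF indep[OF that False], of "\<lambda>x. x - expectation (X i)" borel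
          "\<lambda>x. x - expectation (X j)" borel]
      by (simp add: e_def[abs_def] comp_def)
    then show ?thesis
      using False e_mean that
      by (simp add: has_bochner_integral_iff indep_var_integrable indep_var_lebesgue_integral e_int)
  qed
  have mean: "expectation (\<lambda>\<omega>. \<Sum>j\<in>J. X j \<omega>) = (\<Sum>j\<in>J. expectation (X j))"
    using int by (simp add: Bochner_Integration.integral_sum)
  have dev: "(\<Sum>j\<in>J. X j \<omega>) - (\<Sum>j\<in>J. expectation (X j)) = (\<Sum>j\<in>J. e j \<omega>)" for \<omega>
    by (simp add: e_def sum_subtractf)
  have "(\<lambda>\<omega>. ((\<Sum>j\<in>J. X j \<omega>) - expectation (\<lambda>\<omega>. \<Sum>j\<in>J. X j \<omega>))\<^sup>2) =
      (\<lambda>\<omega>. \<Sum>i\<in>J. \<Sum>j\<in>J. e i \<omega> * e j \<omega>)"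
    unfolding mean dev power2_eq_square sum_product ..
  then have "variance (\<lambda>\<omega>. \<Sum>j\<in>J. X j \<omega>) = expectation (\<lambda>\<omega>. \<Sum>i\<in>J. \<Sum>j\<in>J. e i \<omega> * e j \<omega>)"
    by (rule arg_cong)
  also have "\<dots> = (\<Sum>i\<in>J. \<Sum>j\<in>J. if i = j then variance (X j) else 0)"
    using cross by (simp add: has_bochner_integral_iff Bochner_Integration.integral_sum)
  also have "\<dots> = (\<Sum>j\<in>J. variance (X j))"
    using J by simp
  finally show ?thesis .
qed

definition factors_through ::
    "('i \<Rightarrow> 'a \<Rightarrow> 'b::topological_space) \<Rightarrow> 'i set \<Rightarrow> ('a \<Rightarrow> 'c::topological_space) \<Rightarrow> bool" where
  "factors_through X A Y \<longleftrightarrow>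
     (\<exists>f \<in> borel_measurable (PiM A (\<lambda>_. borel)). \<forall>\<omega>. Y \<omega> = f (\<lambda>i\<in>A. X i \<omega>))"

lemma factors_through_component: "i \<in> A \<Longrightarrow> factors_through X A (X i)"
  unfolding factors_through_def
  by (intro bexI[of _ "\<lambda>x. x i"] measurable_component_singleton) auto

lemma factors_through_const: "factors_through X A (\<lambda>_. c)"
  unfolding factors_through_def by (intro bexI[of _ "\<lambda>_. c"]) auto

lemma factors_through_compose:
  assumes "g \<in> borel_measurable borel" "factors_through X A Y"
  shows "factors_through X A (\<lambda>\<omega>. g (Y \<omega>))"
  using assms unfolding factors_through_def
  by (auto intro!: bexI[of _ "\<lambda>x. g (_ x)"] measurable_compose[of _ _ borel g])

lemma factors_through_add:
  fixes Y Z :: "'a \<Rightarrow> 'c::{second_countable_topology, real_normed_vector}"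
  assumes "factors_through X A Y" "factors_through X A Z"
  shows "factors_through X A (\<lambda>\<omega>. Y \<omega> + Z \<omega>)"
proof -
  obtain f g where [measurable]: "f \<in> borel_measurable (PiM A (\<lambda>_. borel))"
      "g \<in> borel_measurable (PiM A (\<lambda>_. borel))"
    and "\<forall>\<omega>. Y \<omega> = f (\<lambda>i\<in>A. X i \<omega>)" "\<forall>\<omega>. Z \<omega> = g (\<lambda>i\<in>A. X i \<omega>)"
    using assms unfolding factors_through_def by blast
  then show ?thesis
    unfolding factors_through_def by (intro bexI[of _ "\<lambda>x. f x + g x"]) auto
qed

lemma factors_through_mult:
  fixes Y Z :: "'a \<Rightarrow> 'c::{second_countable_topology, real_normed_algebra}"
  assumes "factors_through X A Y" "factors_through X A Z"
  shows "factors_through X A (\<lambda>\<omega>. Y \<omega> * Z \<omega>)"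
proof -
  obtain f g where [measurable]: "f \<in> borel_measurable (PiM A (\<lambda>_. borel))"
      "g \<in> borel_measurable (PiM A (\<lambda>_. borel))"
    and "\<forall>\<omega>. Y \<omega> = f (\<lambda>i\<in>A. X i \<omega>)" "\<forall>\<omega>. Z \<omega> = g (\<lambda>i\<in>A. X i \<omega>)"
    using assms unfolding factors_through_def by blast
  then show ?thesis
    unfolding factors_through_def by (intro bexI[of _ "\<lambda>x. f x * g x"]) auto
qed

lemma factors_through_sum:
  fixes Y :: "'k \<Rightarrow> 'a \<Rightarrow> 'c::{second_countable_topology, real_normed_vector}"
  assumes "finite F" "\<And>k. k \<in> F \<Longrightarrow> factors_through X A (Y k)"
  shows "factors_through X A (\<lambda>\<omega>. \<Sum>k\<in>F. Y k \<omega>)"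
  using assms by (induction F rule: finite_induct) (auto intro: factors_through_const factors_through_add)

lemma (in prob_space) indep_var_factors_through:
  assumes "indep_vars (\<lambda>_. borel) X I" "A \<inter> B = {}" "A \<subseteq> I" "B \<subseteq> I"
    and "factors_through X A Y" "factors_through X B Z"
  shows "indep_var borel Y borel Z"
proof -
  obtain f g where "f \<in> borel_measurable (PiM A (\<lambda>_. borel))" "g \<in> borel_measurable (PiM B (\<lambda>_. borel))"
    and "Y = f \<circ> (\<lambda>\<omega>. \<lambda>i\<in>A. X i \<omega>)" "Z = g \<circ> (\<lambda>\<omega>. \<lambda>i\<in>B. X i \<omega>)"
    using assms(5,6) unfolding factors_through_def by (auto simp: fun_eq_iff)
  then show ?thesis
    using indep_var_compose[OF indep_var_restrict[OF assms(1-4)]] by simp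
qed

section \<open>The estimator\<close>

definition branch_part :: "bool \<Rightarrow> real \<Rightarrow> real" where
  "branch_part b x = (if b then upos x else uneg x)"

lemma upos_minus_uneg: "upos x - uneg x = x"
  by (simp add: upos_def uneg_def)

lemma upos_plus_uneg: "upos x + uneg x = \<bar>x\<bar>"
  by (simp add: upos_def uneg_def)

lemma branch_part_nonneg: "branch_part b x \<ge> 0"
  by (simp add: branch_part_def upos_def uneg_def)

lemma sum_times_UNIV_bool: "(\<Sum>j\<in>A \<times> UNIV. f j) = (\<Sum>a\<in>A. f (a, True) + f (a, False))"
proof -
  have "(\<Sum>j\<in>A \<times> UNIV. f j) = (\<Sum>a\<in>A. \<Sum>b\<in>UNIV. f (a, b))"
    by (simp add: sum.cartesian_product)
  then show ?thesis
    by (simp add: UNIV_bool add.commute)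
qed

definition signal_sources :: "nat \<Rightarrow> bool \<Rightarrow> nat set \<Rightarrow> src set" where
  "signal_sources m b F = (\<lambda>k. SrcH k m b) ` F \<union> (\<lambda>k. SrcPhi k m b) ` F \<union> {SrcZ m b}"

locale estimator_setup = prob_space P for P :: "'a measure" +
  fixes K M :: nat and u \<mu> c :: "nat \<Rightarrow> real" and \<eta> \<sigma>z2 :: real
    and h :: "nat \<Rightarrow> nat \<Rightarrow> bool \<Rightarrow> 'a \<Rightarrow> complex"
    and z :: "nat \<Rightarrow> bool \<Rightarrow> 'a \<Rightarrow> complex"
    and phi :: "nat \<Rightarrow> nat \<Rightarrow> bool \<Rightarrow> 'a \<Rightarrow> real"
  assumes eta_pos: "\<eta> > 0" and noise_pos: "\<sigma>z2 > 0"
    and mu_pos: "\<forall>k\<in>{1..K}. \<mu> k > 0"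
    and c_nonneg: "\<forall>m\<in>{1..M}. c m \<ge> 0"
    and c_sum_pos: "(\<Sum>m\<in>{1..M}. c m) > 0"
    and h_CN: "\<forall>k\<in>{1..K}. \<forall>m\<in>{1..M}. \<forall>b. distributed P lborel (h k m b) (CN_density ((\<mu> k)\<^sup>2))"
    and z_CN: "\<forall>m\<in>{1..M}. \<forall>b. distributed P lborel (z m b) (CN_density \<sigma>z2)"
    and phi_unif: "\<forall>k\<in>{1..K}. \<forall>m\<in>{1..M}. \<forall>b. distributed P lborel (phi k m b) unif_phase_density"
    and sources_indep: "indep_vars (\<lambda>_. borel) (src_family h z phi) (src_index K M)"
begin

abbreviation contrib :: "nat \<Rightarrow> nat \<Rightarrow> bool \<Rightarrow> 'a \<Rightarrow> complex" where
  "contrib k m b \<omega> \<equiv> h k m b \<omega> * coef \<eta> c u \<mu> phi k m b \<omega>"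

abbreviation y :: "nat \<Rightarrow> bool \<Rightarrow> 'a \<Rightarrow> complex" where
  "y \<equiv> rx K \<eta> c u \<mu> h z phi"

definition rx_power :: "nat \<Rightarrow> bool \<Rightarrow> real" where
  "rx_power m b = \<eta> * c m * (\<Sum>k\<in>{1..K}. branch_part b (u k)) + \<sigma>z2"

lemma factors_through_contrib:
  assumes "{SrcH k m b, SrcPhi k m b} \<subseteq> A"
  shows "factors_through (src_family h z phi) A (contrib k m b)"
proof -
  define r where "r = sqrt (\<eta> * c m * branch_part b (u k)) / \<mu> k"
  have "factors_through (src_family h z phi) A (src_family h z phi (SrcH k m b))"
    using assms by (intro factors_through_component) simp
  moreover have "factors_through (src_family h z phi) A
      (\<lambda>\<omega>. of_real r * exp (\<i> * of_real (Re (src_family h z phi (SrcPhi k m b) \<omega>))))"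
    using assms by (intro factors_through_compose[OF _ factors_through_component]) auto
  ultimately have "factors_through (src_family h z phi) A (\<lambda>\<omega>. src_family h z phi (SrcH k m b) \<omega> *
      (of_real r * exp (\<i> * of_real (Re (src_family h z phi (SrcPhi k m b) \<omega>)))))"
    by (rule factors_through_mult)
  then show ?thesis
    by (simp add: src_family_def coef_def r_def branch_part_def)
qed

lemma circular_contrib:
  assumes k: "k \<in> {1..K}" and m: "m \<in> {1..M}"
  shows "circular_rv P (contrib k m b) (\<eta> * c m * branch_part b (u k))"
proof -
  define r where "r = sqrt (\<eta> * c m * branch_part b (u k)) / \<mu> k"
  define E where "E \<omega> = exp (\<i> * of_real (phi k m b \<omega>))" for \<omega>
  have [measurable]: "phi k m b \<in> borel_measurable P"
    using phi_unif k m by (simp add: distributed_def measurable_lborel1)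
  have mu: "\<mu> k > 0"
    using mu_pos k by blast
  have h_circ: "circular_rv P (h k m b) ((\<mu> k)\<^sup>2)"
    using h_CN k m mu by (intro circular_rv_CN) auto
  have "factors_through (src_family h z phi) {SrcH k m b} (h k m b)"
    using factors_through_component[of "SrcH k m b" "{SrcH k m b}" "src_family h z phi"]
    by (simp add: src_family_def)
  moreover have "factors_through (src_family h z phi) {SrcPhi k m b} E"
    using factors_through_compose[OF _ factors_through_component,
        of "\<lambda>w. exp (\<i> * of_real (Re w))" "SrcPhi k m b" "{SrcPhi k m b}" "src_family h z phi"]
    by (simp add: src_family_def E_def[abs_def])
  ultimately have "indep_var borel (h k m b) borel E"
    using k m by (intro indep_var_factors_through[OF sources_indep]) (auto simp: src_index_def)
  moreover have "E \<in> borel_measurable P"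
    unfolding E_def[abs_def] by measurable
  moreover have "cmod (E \<omega>) = 1" for \<omega>
    by (simp add: E_def)
  ultimately have "circular_rv P (\<lambda>\<omega>. h k m b \<omega> * (of_real r * E \<omega>)) (r\<^sup>2 * (\<mu> k)\<^sup>2)"
    by (intro circular_rv_mult_unimodular[OF prob_space_axioms h_circ])
  moreover have "r\<^sup>2 * (\<mu> k)\<^sup>2 = \<eta> * c m * branch_part b (u k)"
    using eta_pos c_nonneg mu k m branch_part_nonneg[of b "u k"]
    by (simp add: r_def power_divide)
  moreover have "contrib k m b = (\<lambda>\<omega>. h k m b \<omega> * (of_real r * E \<omega>))"
    by (simp add: fun_eq_iff coef_def r_def E_def branch_part_def)
  ultimately show ?thesis
    by simp
qed

lemma circular_partial_rx:
  assumes F: "F \<subseteq> {1..K}" and m: "m \<in> {1..M}"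
  shows "circular_rv P (\<lambda>\<omega>. (\<Sum>k\<in>F. contrib k m b \<omega>) + z m b \<omega>)
           (\<eta> * c m * (\<Sum>k\<in>F. branch_part b (u k)) + \<sigma>z2)"
proof -
  from F have "finite F" by (rule finite_subset) simp
  then show ?thesis
    using F
  proof (induction F rule: finite_induct)
    case empty
    show ?case
      using z_CN noise_pos m by (simp add: circular_rv_CN)
  next
    case (insert k F)
    have sources_F: "factors_through (src_family h z phi) (signal_sources m b F)
        (\<lambda>\<omega>. (\<Sum>k\<in>F. contrib k m b \<omega>) + z m b \<omega>)"
      using factors_through_component[of "SrcZ m b" "signal_sources m b F" "src_family h z phi"]
      by (intro factors_through_add factors_through_sum factors_through_contrib insert.hyps)
        (auto simp: signal_sources_def src_family_def)
    have "indep_var borel (\<lambda>\<omega>. (\<Sum>k\<in>F. contrib k m b \<omega>) + z m b \<omega>) borel (contrib k m b)"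
      using insert m
      by (intro indep_var_factors_through[OF sources_indep _ _ _ sources_F
            factors_through_contrib[of k m b "{SrcH k m b, SrcPhi k m b}"]])
        (auto simp: signal_sources_def src_index_def)
    from circular_rv_add[OF prob_space_axioms insert.IH circular_contrib this] insert m
    show ?case
      by (simp add: distrib_left add_ac)
  qed
qed

lemma circular_rx: "m \<in> {1..M} \<Longrightarrow> circular_rv P (y m b) (rx_power m b)"
  using circular_partial_rx[of "{1..K}" m b] by (simp add: rx_def[abs_def] rx_power_def)

lemma factors_through_rx: "factors_through (src_family h z phi) (signal_sources m b {1..K}) (y m b)"
  unfolding rx_def[abs_def]
  using factors_through_component[of "SrcZ m b" "signal_sources m b {1..K}" "src_family h z phi"]
  by (intro factors_through_add factors_through_sum factors_through_contrib)
    (auto simp: signal_sources_def src_family_def)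

lemma indep_rx:
  assumes "m \<in> {1..M}" "m' \<in> {1..M}" "(m, b) \<noteq> (m', b')"
  shows "indep_var borel (y m b) borel (y m' b')"
  using assms
  by (intro indep_var_factors_through[OF sources_indep _ _ _ factors_through_rx factors_through_rx])
    (auto simp: signal_sources_def src_index_def)

definition branch_weight :: "bool \<Rightarrow> real" where
  "branch_weight b = (if b then 1 else -1) / (\<eta> * (\<Sum>m\<in>{1..M}. c m))"

definition branch_term :: "nat \<Rightarrow> bool \<Rightarrow> 'a \<Rightarrow> real" where
  "branch_term m b \<omega> = branch_weight b * cmod (y m b \<omega>) ^ 2"

lemma s_hat_eq_sum:
  "s_hat K M \<eta> c u \<mu> h z phi = (\<lambda>\<omega>. \<Sum>j\<in>{1..M} \<times> UNIV. branch_term (fst j) (snd j) \<omega>)"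
  by (simp add: fun_eq_iff s_hat_def branch_term_def branch_weight_def sum_times_UNIV_bool
      sum_distrib_left diff_divide_distrib)

lemma
  assumes "m \<in> {1..M}"
  shows integrable_branch_term: "integrable P (branch_term m b)"
    and integrable_branch_term_square: "integrable P (\<lambda>\<omega>. (branch_term m b \<omega>)\<^sup>2)"
    and expectation_branch_term: "expectation (branch_term m b) = branch_weight b * rx_power m b"
    and variance_branch_term: "variance (branch_term m b) = (branch_weight b)\<^sup>2 * (rx_power m b)\<^sup>2"
  using circular_rv_scaled_norm_square[OF prob_space_axioms circular_rx[OF assms], of "branch_weight b"]
  unfolding branch_term_def[abs_def] by auto

lemma rx_power_difference:
  "rx_power m True - rx_power m False = \<eta> * c m * (\<Sum>k\<in>{1..K}. u k)"
  by (simp add: rx_power_def branch_part_def upos_minus_uneg flip: right_diff_distrib sum_subtractf)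

lemma estimator_mean: "expectation (s_hat K M \<eta> c u \<mu> h z phi) = (\<Sum>k\<in>{1..K}. u k)"
proof -
  define C where "C = (\<Sum>m\<in>{1..M}. c m)"
  have "expectation (s_hat K M \<eta> c u \<mu> h z phi) =
      (\<Sum>j\<in>{1..M} \<times> UNIV. branch_weight (snd j) * rx_power (fst j) (snd j))"
    unfolding s_hat_eq_sum
    by (simp add: Bochner_Integration.integral_sum integrable_branch_term expectation_branch_term
        mem_Times_iff)
  also have "\<dots> = (\<Sum>m\<in>{1..M}. (rx_power m True - rx_power m False) / (\<eta> * C))"
    by (simp add: sum_times_UNIV_bool branch_weight_def C_def diff_divide_distrib)
  also have "\<dots> = C * (\<Sum>k\<in>{1..K}. u k) / C"
    using eta_pos by (simp add: rx_power_difference C_def sum_divide_distrib sum_distrib_right)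
  also have "\<dots> = (\<Sum>k\<in>{1..K}. u k)"
    using c_sum_pos by (simp add: C_def)
  finally show ?thesis .
qed

lemma estimator_variance:
  "variance (s_hat K M \<eta> c u \<mu> h z phi) =
     (\<Sum>m\<in>{1..M}. (c m)\<^sup>2) / (\<Sum>m\<in>{1..M}. c m)\<^sup>2
       * ((\<Sum>k\<in>{1..K}. upos (u k))\<^sup>2 + (\<Sum>k\<in>{1..K}. uneg (u k))\<^sup>2)
     + 2 * \<sigma>z2 / (\<eta> * (\<Sum>m\<in>{1..M}. c m)) * (\<Sum>k\<in>{1..K}. \<bar>u k\<bar>)
     + 2 * real M * \<sigma>z2\<^sup>2 / (\<eta>\<^sup>2 * (\<Sum>m\<in>{1..M}. c m)\<^sup>2)"
proof -
  define C where "C = (\<Sum>m\<in>{1..M}. c m)"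
  define Sp where "Sp = (\<Sum>k\<in>{1..K}. upos (u k))"
  define Sn where "Sn = (\<Sum>k\<in>{1..K}. uneg (u k))"
  have C: "C > 0"
    using c_sum_pos by (simp add: C_def)
  have indep: "indep_var borel (branch_term (fst i) (snd i)) borel (branch_term (fst j) (snd j))"
    if "i \<in> {1..M} \<times> UNIV" "j \<in> {1..M} \<times> UNIV" "i \<noteq> j" for i j
    using indep_var_compose[OF indep_rx[of "fst i" "fst j" "snd i" "snd j"],
        of "\<lambda>w. branch_weight (snd i) * cmod w ^ 2" borel "\<lambda>w. branch_weight (snd j) * cmod w ^ 2" borel]
      that by (auto simp: comp_def prod_eq_iff branch_term_def[abs_def])
  have "variance (s_hat K M \<eta> c u \<mu> h z phi) =
      (\<Sum>j\<in>{1..M} \<times> UNIV. variance (branch_term (fst j) (snd j)))"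
    unfolding s_hat_eq_sum
    by (rule variance_sum_indep) (auto intro: integrable_branch_term integrable_branch_term_square indep)
  also have "\<dots> = (\<Sum>m\<in>{1..M}. (rx_power m True)\<^sup>2 + (rx_power m False)\<^sup>2) / (\<eta> * C)\<^sup>2"
    by (simp add: sum_times_UNIV_bool variance_branch_term branch_weight_def C_def power_divide
        sum_divide_distrib add_divide_distrib)
  also have "\<dots> = (\<Sum>m\<in>{1..M}. \<eta>\<^sup>2 * (Sp\<^sup>2 + Sn\<^sup>2) * (c m)\<^sup>2 + 2 * \<eta> * \<sigma>z2 * (Sp + Sn) * c m
      + 2 * \<sigma>z2\<^sup>2) / (\<eta> * C)\<^sup>2"
    unfolding rx_power_def branch_part_def if_True if_False Sp_def[symmetric] Sn_def[symmetric]
    by (simp add: power2_eq_square algebra_simps)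
  also have "\<dots> = (\<eta>\<^sup>2 * (Sp\<^sup>2 + Sn\<^sup>2) * (\<Sum>m\<in>{1..M}. (c m)\<^sup>2) + 2 * \<eta> * \<sigma>z2 * (Sp + Sn) * C
      + 2 * real M * \<sigma>z2\<^sup>2) / (\<eta> * C)\<^sup>2"
    by (simp add: sum.distrib C_def sum_distrib_left)
  also have "\<dots> = (\<Sum>m\<in>{1..M}. (c m)\<^sup>2) / C\<^sup>2 * (Sp\<^sup>2 + Sn\<^sup>2) + 2 * \<sigma>z2 / (\<eta> * C) * (Sp + Sn)
      + 2 * real M * \<sigma>z2\<^sup>2 / (\<eta>\<^sup>2 * C\<^sup>2)"
    using eta_pos C by (simp add: field_simps power2_eq_square)
  also have "Sp + Sn = (\<Sum>k\<in>{1..K}. \<bar>u k\<bar>)"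
    by (simp add: Sp_def Sn_def upos_plus_uneg flip: sum.distrib)
  finally show ?thesis
    by (simp add: C_def Sp_def Sn_def)
qed

end

theorem proposition2:
  fixes P :: "'a measure"
    and K M :: nat
    and u \<mu> c :: "nat \<Rightarrow> real"
    and \<eta> \<sigma>z2 :: real
    and h :: "nat \<Rightarrow> nat \<Rightarrow> bool \<Rightarrow> 'a \<Rightarrow> complex"
    and z :: "nat \<Rightarrow> bool \<Rightarrow> 'a \<Rightarrow> complex"
    and phi :: "nat \<Rightarrow> nat \<Rightarrow> bool \<Rightarrow> 'a \<Rightarrow> real"
  assumes "prob_space P"
    and "K \<ge> 1" and "M \<ge> 1"
    and "\<eta> > 0" and "\<sigma>z2 > 0"
    and "\<forall>k\<in>{1..K}. \<mu> k > 0"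
    and "\<forall>m\<in>{1..M}. c m \<ge> 0"
    and "(\<Sum>m\<in>{1..M}. c m) > 0"
    and "\<forall>k\<in>{1..K}. \<forall>m\<in>{1..M}. \<forall>b.
           distributed P lborel (h k m b) (CN_density ((\<mu> k)\<^sup>2))"
    and "\<forall>m\<in>{1..M}. \<forall>b. distributed P lborel (z m b) (CN_density \<sigma>z2)"
    and "\<forall>k\<in>{1..K}. \<forall>m\<in>{1..M}. \<forall>b.
           distributed P lborel (phi k m b) unif_phase_density"
    and "prob_space.indep_vars P (\<lambda>_. borel) (src_family h z phi) (src_index K M)"
  shows "prob_space.expectation P (s_hat K M \<eta> c u \<mu> h z phi) = (\<Sum>k\<in>{1..K}. u k)
    \<and> prob_space.variance P (s_hat K M \<eta> c u \<mu> h z phi) =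
           (\<Sum>m\<in>{1..M}. (c m)\<^sup>2) / (\<Sum>m\<in>{1..M}. c m)\<^sup>2
             * ((\<Sum>k\<in>{1..K}. upos (u k))\<^sup>2 + (\<Sum>k\<in>{1..K}. uneg (u k))\<^sup>2)
           + 2 * \<sigma>z2 / (\<eta> * (\<Sum>m\<in>{1..M}. c m)) * (\<Sum>k\<in>{1..K}. \<bar>u k\<bar>)
           + 2 * real M * \<sigma>z2\<^sup>2 / (\<eta>\<^sup>2 * (\<Sum>m\<in>{1..M}. c m)\<^sup>2)"
proof -
  interpret estimator_setup P K M u \<mu> c \<eta> \<sigma>z2 h z phi
    using assms unfolding estimator_setup_def estimator_setup_axioms_def by blast
  show ?thesis
    using estimator_mean estimator_variance by (rule conjI)
qed

end
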